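(* For every integer $r\ge2$, $$\log\mathcal C_r\left(\frac14\right)=\left(\frac14\right)^{r-1}\left(-\frac12\log2+(r-1)\sum_{n=1}^\infty\frac{\lambda(2n)}{n(2n+r-1)2^{2n}}\right).$$
   Context: For an integer $r\ge2$ let $P_r(y)=(1-y)\exp\left(y+\frac{y^2}{2}+\cdots+\frac{y^r}{r}\right)$. The multiple cosine function of Kurokawa–Koyama of order $r\ge2$ is $\mathcal C_r(x)=\prod_{n\ge1,\ n\text{ odd}}\left\{P_r\left(\frac{x}{n/2}\right)P_r\left(-\frac{x}{n/2}\right)^{(-1)^{r-1}}\right\}^{(n/2)^{r-1}}$, interpreted as $\mathcal C_r(x)=\exp\Big(\sum_{n\ge1,\,n\text{ odd}}(n/2)^{r-1}\big[\operatorname{Log}P_r(2x/n)+(-1)^{r-1}\operatorname{Log}P_r(-2x/n)\big]\Big)$, where $\operatorname{Log}P_r(y):=\operatorname{Log}(1-y)+y+\frac{y^2}{2}+\cdots+\frac{y^r}{r}$ with $\operatorname{Log}$ the principal branch. The series converges and defines a holomorphic function on $D=\mathbb C\setminus\big((-\infty,-\tfrac12]\cup[\tfrac12,\infty)\big)$, positive on $(-\tfrac12,\tfrac12)$; $\log\mathcal C_r(x)$ denotes the exponent above (the real logarithm for real $|x|<\tfrac12$). $\lambda(s)=\sum_{n=0}^\infty\frac1{(2n+1)^s}$. *)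

theory Defs
  imports "HOL-Analysis.Analysis"
begin

definition LogP :: "nat \<Rightarrow> complex \<Rightarrow> complex" where
  "LogP r y = Ln (1 - y) + (\<Sum>k=1..r. y ^ k / of_nat k)"

definition logC :: "nat \<Rightarrow> complex \<Rightarrow> complex" where
  "logC r x = (\<Sum>m. let n = of_nat (2 * m + 1) :: complex in
       (n / 2) ^ (r - 1) * (LogP r (2 * x / n) + (-1) ^ (r - 1) * LogP r (- 2 * x / n)))"

definition dlambda :: "real \<Rightarrow> real" where
  "dlambda s = (\<Sum>n. 1 / (real (2 * n + 1)) powr s)"

end

theory Submission
  imports Defs
begin

text \<open>
  At \<open>x = 1/4\<close> the \<open>n\<close>-th factor has argument \<open>a = 1/(2n)\<close>, and
  \<open>(n/2)^(r-1) = (1/4)^(r-1) a^(1-r)\<close>. Expanding both logarithms in power series,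
  the terms up to degree \<open>r\<close> cancel and the odd-degree terms of the tails cancel in the
  symmetrized combination, which leaves \<open>-2 \<Sum>\<^sub>j a^(2j+2)/(2j+r+1)\<close>. Splitting
  off \<open>ln (1 - a\<^sup>2) = - \<Sum>\<^sub>j a^(2j+2)/(j+1)\<close> leaves the nonnegative terms
  \<open>(r-1) a^(2j+2)/((j+1)(2j+r+1))\<close>; summing these over odd \<open>n\<close> first produces
  \<open>\<lambda>(2j+2)\<close>, and the sum of \<open>ln (1 - 1/(4n\<^sup>2))\<close> over odd \<open>n\<close> is
  \<open>ln (1/\<surd>2)\<close> by the product formula for \<open>cos (\<pi>/4) = sin (\<pi>/2) / (2 sin (\<pi>/4))\<close>.
\<close>

definition LogPr :: "nat \<Rightarrow> real \<Rightarrow> real" where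
  "LogPr r y = ln (1 - y) + (\<Sum>k=1..r. y ^ k / real k)"

definition LogPr_sym :: "nat \<Rightarrow> real \<Rightarrow> real" where
  "LogPr_sym r a = (1/a) ^ (r-1) * (LogPr r a + (-1) ^ (r-1) * LogPr r (-a))"

lemma LogP_of_real:
  assumes "y < 1"
  shows "LogP r (complex_of_real y) = complex_of_real (LogPr r y)"
proof -
  have "Ln (1 - complex_of_real y) = complex_of_real (ln (1 - y))"
    using Ln_of_real[of "1 - y"] assms by simp
  then show ?thesis unfolding LogP_def LogPr_def by simp
qed

lemma LogPr_sums:
  assumes "\<bar>y\<bar> < 1"
  shows "(\<lambda>i. - (y ^ (i + Suc r)) / real (i + Suc r)) sums LogPr r y"
proof -
  have "(\<lambda>n. - ((-(-y))^n) / of_nat n) sums ln (1 + -y)"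
    by (rule ln_series') (simp add: assms)
  then have ln_sums: "(\<lambda>n. - (y^n) / real n) sums ln (1 - y)" by simp
  have "{..<Suc r} = insert 0 {1..r}" by auto
  then have head: "(\<Sum>i<Suc r. - (y^i) / real i) = - (\<Sum>k=1..r. y ^ k / real k)"
    by (simp add: sum_negf)
  have "(\<lambda>n. - (y^n) / real n) sums (LogPr r y + (\<Sum>i<Suc r. - (y^i) / real i))"
    unfolding head LogPr_def using ln_sums by simp
  from sums_iff_shift[THEN iffD2, OF this] show ?thesis by simp
qed

lemma LogPr_sym_tail_term:
  assumes "a \<noteq> 0" "r \<ge> 2"
  shows "(1/a)^(r-1) * (- (a ^ (i + Suc r)) / real (i + Suc r) +
           (-1)^(r-1) * (- ((-a) ^ (i + Suc r)) / real (i + Suc r)))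
         = (if even i then -2 * a^(i+2) / real (i + r + 1) else 0)"
proof -
  obtain q where q: "r = Suc q" using assms by (cases r) auto
  have sign: "(-1::real)^q * (-1)^(i + Suc r) = (-1)^i"
  proof -
    have "q + (i + Suc r) = i + 2*(q+1)" using q by simp
    then have "(-1::real)^q * (-1)^(i + Suc r) = (-1)^(i + 2*(q+1))"
      by (simp only: flip: power_add)
    also have "\<dots> = (-1)^i" by (simp only: power_add power_mult) simp
    finally show ?thesis .
  qed
  have scale: "(1/a)^q * a ^ (i + Suc r) = a^(i+2)"
    using q assms by (simp add: power_add field_simps)
  have "(1/a)^(r-1) * (- (a ^ (i + Suc r)) / real (i + Suc r) +
          (-1)^(r-1) * (- ((-a) ^ (i + Suc r)) / real (i + Suc r)))
        = - ((1/a)^q * a ^ (i + Suc r)) * (1 + (-1)^q * (-1)^(i + Suc r)) / real (i + Suc r)"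
  proof -
    have factor: "\<And>c x y s d :: real. d > 0 \<Longrightarrow> c * (-x/d + s * (-(y*x)/d)) = -(c*x) * (1 + s*y) / d"
      by (simp add: field_simps)
    have "r - 1 = q" "(-a) ^ (i + Suc r) = (-1)^(i + Suc r) * a ^ (i + Suc r)"
      using q by (simp_all add: power_minus')
    then show ?thesis by (simp only:) (rule factor, simp)
  qed
  also have "\<dots> = - (a^(i+2)) * (1 + (-1)^i) / real (i + r + 1)"
    unfolding sign scale by simp
  finally show ?thesis by auto
qed

lemma LogPr_sym_sums:
  assumes "a \<noteq> 0" "\<bar>a\<bar> < 1" "r \<ge> 2"
  shows "(\<lambda>j. -2 * a^(2*j+2) / real (2*j + r + 1)) sums LogPr_sym r a"
proof -
  define f where "f i = (if even i then -2 * a^(i+2) / real (i + r + 1) else 0)" for i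
  have "(\<lambda>i. (1/a)^(r-1) * (- (a ^ (i + Suc r)) / real (i + Suc r) +
          (-1)^(r-1) * (- ((-a) ^ (i + Suc r)) / real (i + Suc r)))) sums LogPr_sym r a"
    unfolding LogPr_sym_def using assms by (intro sums_mult sums_add LogPr_sums) auto
  then have "f sums LogPr_sym r a"
    unfolding f_def using LogPr_sym_tail_term[OF assms(1,3)] by simp
  moreover have "f n = 0" if "n \<notin> range (\<lambda>j::nat. 2 * j)" for n
    using that unfolding f_def by (auto elim!: evenE)
  moreover have "strict_mono (\<lambda>j::nat. 2 * j)" by (simp add: strict_mono_def)
  ultimately have "(\<lambda>j. f (2*j)) sums LogPr_sym r a"
    by (subst sums_mono_reindex) auto
  then show ?thesis unfolding f_def by simp
qed

lemma ln_one_minus_square_sums: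
  fixes a :: real
  assumes "\<bar>a\<bar> < 1"
  shows "(\<lambda>j. - (a^(2*j+2)) / real (j+1)) sums ln (1 - a^2)"
proof -
  have "(\<lambda>n. - ((-(-(a^2)))^n) / of_nat n) sums ln (1 + -(a^2))"
    by (rule ln_series') (use assms in \<open>simp add: abs_square_less_1\<close>)
  then have "(\<lambda>n. - ((a^2)^Suc n) / real (Suc n)) sums ln (1 - a^2)"
    by (subst sums_Suc_iff) simp
  moreover have "(a^2)^(Suc n) = a^(2*n+2)" for n
    by (metis add.commute power_Suc2 power_add power_mult)
  ultimately show ?thesis by simp
qed

lemma LogPr_sym_minus_ln_sums:
  assumes "a \<noteq> 0" "\<bar>a\<bar> < 1" "r \<ge> 2"
  shows "(\<lambda>j. real (r-1) * a^(2*j+2) / (real (j+1) * real (2*j+r+1))) sums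
           (LogPr_sym r a - ln (1 - a^2))"
proof -
  have "(\<lambda>j. -2 * a^(2*j+2) / real (2*j + r + 1) - - (a^(2*j+2)) / real (j+1)) sums
          (LogPr_sym r a - ln (1 - a^2))"
    using assms by (intro sums_diff LogPr_sym_sums ln_one_minus_square_sums)
  moreover have "-2 * a^(2*j+2) / real (2*j + r + 1) - - (a^(2*j+2)) / real (j+1) =
                 real (r-1) * a^(2*j+2) / (real (j+1) * real (2*j+r+1))" for j
  proof -
    have partial_fractions: "\<And>d e c b :: real. d > 0 \<Longrightarrow> e > 0 \<Longrightarrow> e = 2*d + c \<Longrightarrow>
        -2*b/e - -b/d = c*b/(d*e)"
      by (simp add: field_simps)
    have "real (2*j+r+1) = 2 * real (j+1) + real (r-1)" using assms by simp
    from partial_fractions[OF _ _ this, of "a^(2*j+2)"] show ?thesis by (simp add: mult_ac)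
  qed
  ultimately show ?thesis by simp
qed

lemma prod_one_minus_inverse_odd_square_LIMSEQ:
  "(\<lambda>N. \<Prod>m<N. 1 - (1 / (2 * real (2*m+1)))^2) \<longlonglongrightarrow> 1 / sqrt 2"
proof -
  define Q where "Q x n = (\<Prod>k=1..n. 1 - x^2 / real k^2)" for x :: real and n
  define P where "P N = (\<Prod>m<N. 1 - (1 / (2 * real (2*m+1)))^2)" for N
  have Q_sin: "Q x \<longlonglongrightarrow> sin (pi * x) / (pi * x)" if "x \<noteq> 0" for x
    unfolding Q_def using that by (rule sin_product_formula_real')
  \<comment> \<open>The odd \<open>k\<close> give the factors of \<open>P\<close>, the even \<open>k = 2k'\<close> those of \<open>Q (1/4)\<close>.\<close>
  have split: "Q (1/2) (2*N) = P N * Q (1/4) N" for N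
  proof (induction N)
    case 0
    then show ?case by (simp add: Q_def P_def)
  next
    case (Suc N)
    have "(1/2)^2 / real (Suc (2*N))^2 = (1 / (2 * real (2*N+1)))^2"
         "(1/2::real)^2 / real (Suc (Suc (2*N)))^2 = (1/4)^2 / real (Suc N)^2"
      by (simp_all add: field_simps power2_eq_square)
    with Suc show ?case
      unfolding Q_def P_def by (simp add: prod.nat_ivl_Suc' mult_ac)
  qed
  have Q_pos: "Q (1/4) N > 0" for N
  proof -
    have "(1/4)^2 / real k^2 < (1::real)" if "k \<ge> 1" for k
    proof -
      have "real k ^ 2 \<ge> 1" using that by simp
      then show ?thesis by (simp add: divide_simps)
    qed
    then show ?thesis unfolding Q_def by (intro prod_pos) auto
  qed
  have "(\<lambda>N. Q (1/2) (2*N)) \<longlonglongrightarrow> 2/pi"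
    using LIMSEQ_subseq_LIMSEQ[OF Q_sin[of "1/2"], of "\<lambda>N. 2 * N"]
    by (simp add: strict_mono_def comp_def)
  moreover have "Q (1/4) \<longlonglongrightarrow> (sqrt 2 / 2) / (pi / 4)"
    using Q_sin[of "1/4"] sin_45 by (simp add: field_simps)
  ultimately have "(\<lambda>N. Q (1/2) (2*N) / Q (1/4) N) \<longlonglongrightarrow> (2/pi) / ((sqrt 2 / 2) / (pi / 4))"
    by (intro tendsto_divide) simp_all
  moreover have "(2/pi) / ((sqrt 2 / 2) / (pi / 4)) = 1 / sqrt 2"
    by (simp add: field_simps)
  moreover have "Q (1/2) (2*N) / Q (1/4) N = P N" for N
    using split[of N] Q_pos[of N] by simp
  ultimately show ?thesis unfolding P_def by simp
qed

lemma inverse_odd_square_lt_one: "(1 / (2 * real (2*m+1)))^2 < 1"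
  unfolding abs_square_less_1 by simp

lemma ln_one_minus_inverse_odd_square_sums:
  "(\<lambda>m. ln (1 - (1 / (2 * real (2*m+1)))^2)) sums (- (1/2) * ln 2)"
proof -
  have "(\<lambda>N. ln (\<Prod>m<N. 1 - (1 / (2 * real (2*m+1)))^2)) \<longlonglongrightarrow> ln (1 / sqrt 2)"
    by (intro tendsto_ln prod_one_minus_inverse_odd_square_LIMSEQ) simp
  moreover have "ln (1 / sqrt 2) = - (1/2) * ln 2"
    by (simp add: ln_div ln_sqrt)
  moreover have "ln (\<Prod>m<N. 1 - (1 / (2 * real (2*m+1)))^2)
                 = (\<Sum>m<N. ln (1 - (1 / (2 * real (2*m+1)))^2))" for N
    using inverse_odd_square_lt_one by (intro ln_prod) (auto simp: less_le)
  ultimately show ?thesis unfolding sums_def by simp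
qed

lemma sums_swap_nonneg:
  fixes f :: "nat \<Rightarrow> nat \<Rightarrow> real"
  assumes nonneg: "\<And>j m. f j m \<ge> 0"
    and rows: "\<And>j. (\<lambda>m. f j m) sums g j"
    and "summable g"
    and columns: "\<And>m. (\<lambda>j. f j m) sums h m"
  shows "h sums (\<Sum>j. g j)"
proof -
  have "g j \<ge> 0" for j using rows[of j] nonneg by (metis sums_le sums_zero)
  then have g_has_sum: "(g has_sum (\<Sum>j. g j)) UNIV"
    using sums_nonneg_imp_has_sum[OF summable_sums[OF \<open>summable g\<close>]] by blast
  have rows': "((\<lambda>m. (\<lambda>(j,m). f j m) (j, m)) has_sum g j) UNIV" for j
    using sums_nonneg_imp_has_sum[OF rows[of j]] nonneg by simp
  have columns': "((\<lambda>j. (\<lambda>(m,j). f j m) (m, j)) has_sum h m) UNIV" for m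
    using sums_nonneg_imp_has_sum[OF columns[of m]] nonneg by simp
  have "(\<lambda>(j,m). f j m) summable_on UNIV \<times> UNIV"
    using rows' g_has_sum has_sum_imp_summable nonneg by (intro summable_on_SigmaI) auto
  then have "((\<lambda>(j,m). f j m) has_sum (\<Sum>j. g j)) (UNIV \<times> UNIV)"
    using has_sum_SigmaI[OF rows' g_has_sum] by simp
  then have "((\<lambda>(m,j). f j m) has_sum (\<Sum>j. g j)) (UNIV \<times> UNIV)"
    by (subst (asm) has_sum_swap) (simp add: case_prod_unfold)
  then have "((\<lambda>(m,j). f j m) has_sum (\<Sum>j. g j)) (Sigma UNIV (\<lambda>_. UNIV))" by simp
  from has_sum_Sigma'[OF this columns'] show ?thesis by (rule has_sum_imp_sums)
qed

lemma dlambda_even: "dlambda (2 * real k) = (\<Sum>m. 1 / real (2*m+1) ^ (2*k))"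
proof -
  have "real (2*m+1) powr (2 * real k) = real (2*m+1) ^ (2*k)" for m
    using powr_realpow[of "real (2*m+1)" "2*k"] by simp
  then show ?thesis unfolding dlambda_def by simp
qed

lemma
  assumes "k \<ge> 1"
  shows summable_inverse_odd_powers: "summable (\<lambda>m. 1 / real (2*m+1) ^ (2*k))"
    and dlambda_even_le: "dlambda (2 * real k) \<le> pi^2 / 6"
proof -
  have bound: "1 / real (2*m+1) ^ (2*k) \<le> 1 / (1 + real m)^2" for m
  proof -
    have "(1 + real m)^2 \<le> real (2*m+1)^2" by (intro power_mono) auto
    also have "\<dots> \<le> real (2*m+1) ^ (2*k)" by (rule power_increasing) (use assms in auto)
    finally show ?thesis by (intro divide_left_mono) auto
  qed
  have basel: "(\<lambda>n. 1 / (1 + real n)^2) sums (pi^2 / 6)"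
    using inverse_squares_sums by simp
  show summable: "summable (\<lambda>m. 1 / real (2*m+1) ^ (2*k))"
    using bound by (intro summable_comparison_test'[OF sums_summable[OF basel], of 0]) auto
  show "dlambda (2 * real k) \<le> pi^2 / 6"
    unfolding dlambda_even
    using suminf_le[OF bound summable sums_summable[OF basel]] sums_unique[OF basel] by simp
qed

lemma dlambda_even_sums:
  "k \<ge> 1 \<Longrightarrow> (\<lambda>m. 1 / real (2*m+1) ^ (2*k)) sums dlambda (2 * real k)"
  unfolding dlambda_even by (intro summable_sums summable_inverse_odd_powers)

lemma dlambda_even_nonneg: "k \<ge> 1 \<Longrightarrow> dlambda (2 * real k) \<ge> 0"
  by (rule sums_le[OF _ sums_zero dlambda_even_sums]) simp_all

lemma summable_dlambda_even_series:
  "summable (\<lambda>j. dlambda (2 * real (Suc j)) / (real (Suc j) * real (2 * Suc j + r - 1) * 2 ^ (2 * Suc j)))"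
  (is "summable ?t")
proof (rule summable_comparison_test'[of "\<lambda>j. pi^2 / 6 * (1/4)^(Suc j)" 0])
  show "summable (\<lambda>j. pi^2 / 6 * (1/4::real)^(Suc j))"
    by (intro summable_mult summable_Suc_iff[THEN iffD2] summable_geometric) simp
next
  fix j :: nat
  have "1 \<le> Suc j * (2 * Suc j + r - 1)" by simp
  then have denom: "(1::real) \<le> real (Suc j) * real (2 * Suc j + r - 1)"
    by (metis of_nat_1 of_nat_le_iff of_nat_mult)
  have four: "(2::real) ^ (2 * Suc j) = 4 ^ Suc j" by (simp only: power_mult) simp
  have "4 ^ Suc j \<le> real (Suc j) * real (2 * Suc j + r - 1) * (4::real) ^ Suc j"
    using denom by simp
  then have "?t j \<le> dlambda (2 * real (Suc j)) / 4 ^ Suc j"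
    unfolding four using denom dlambda_even_nonneg[of "Suc j"] by (intro divide_left_mono) auto
  also have "\<dots> \<le> (pi^2 / 6) / 4 ^ Suc j"
    using dlambda_even_le[of "Suc j"] by (intro divide_right_mono) simp_all
  also have "\<dots> = pi^2 / 6 * (1/4)^(Suc j)"
    by (simp add: power_one_over)
  finally have "?t j \<le> pi^2 / 6 * (1/4)^(Suc j)" .
  moreover have "?t j \<ge> 0"
    by (intro divide_nonneg_nonneg dlambda_even_nonneg) simp_all
  ultimately show "norm (?t j) \<le> pi^2 / 6 * (1/4)^(Suc j)"
    by (simp only: real_norm_def abs_of_nonneg)
qed

lemma dlambda_even_scaled_sums:
  assumes "k \<ge> 1"
  shows "(\<lambda>m. (1 / (2 * real (2*m+1))) ^ (2*k)) sums (dlambda (2 * real k) / 2 ^ (2*k))"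
proof -
  have "(1 / (2 * real (2*m+1))) ^ (2*k) = 1 / 2 ^ (2*k) * (1 / real (2*m+1) ^ (2*k))" for m
    by (simp only: power_divide power_mult_distrib power_one) simp
  moreover have "dlambda (2 * real k) / 2 ^ (2*k) = 1 / 2 ^ (2*k) * dlambda (2 * real k)"
    by simp
  ultimately show ?thesis
    using assms by (simp only:) (intro sums_mult dlambda_even_sums)
qed

lemma LogPr_sym_odd_sums:
  assumes "r \<ge> 2"
  shows "(\<lambda>m. LogPr_sym r (1 / (2 * real (2*m+1)))) sums
    (- (1/2) * ln 2 + real (r - 1) *
      (\<Sum>j. dlambda (2 * real (Suc j)) / (real (Suc j) * real (2 * Suc j + r - 1) * 2 ^ (2 * Suc j))))"
proof -
  define a where "a m = 1 / (2 * real (2*m+1))" for m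
  define t where "t j = dlambda (2 * real (Suc j)) / (real (Suc j) * real (2 * Suc j + r - 1) * 2 ^ (2 * Suc j))" for j
  define f where "f j m = real (r-1) * a m ^ (2*j+2) / (real (j+1) * real (2*j+r+1))" for j m
  have a_bounds: "0 < a m" "a m < 1" for m
    unfolding a_def by (auto simp: field_simps)
  have rows: "(\<lambda>m. f j m) sums (real (r-1) * t j)" for j
  proof -
    have "(\<lambda>m. real (r-1) / (real (j+1) * real (2*j+r+1)) * a m ^ (2 * Suc j)) sums
          (real (r-1) / (real (j+1) * real (2*j+r+1)) * (dlambda (2 * real (Suc j)) / 2 ^ (2 * Suc j)))"
      unfolding a_def by (intro sums_mult dlambda_even_scaled_sums) simp
    moreover have "2 * Suc j + r - 1 = 2*j+r+1" "2 * Suc j = 2*j+2" by simp_all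
    ultimately show ?thesis unfolding f_def t_def by (simp add: field_simps)
  qed
  have columns: "(\<lambda>j. f j m) sums (LogPr_sym r (a m) - ln (1 - a m ^ 2))" for m
    unfolding f_def using a_bounds[of m] assms by (intro LogPr_sym_minus_ln_sums) auto
  have nonneg: "f j m \<ge> 0" for j m
    unfolding f_def using a_bounds[of m] by (intro divide_nonneg_nonneg mult_nonneg_nonneg) auto
  have "summable (\<lambda>j. real (r-1) * t j)"
    unfolding t_def by (intro summable_mult summable_dlambda_even_series)
  then have "(\<lambda>m. LogPr_sym r (a m) - ln (1 - a m ^ 2)) sums (\<Sum>j. real (r-1) * t j)"
    by (intro sums_swap_nonneg[OF nonneg rows _ columns])
  then have "(\<lambda>m. (LogPr_sym r (a m) - ln (1 - a m ^ 2)) + ln (1 - a m ^ 2)) sums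
      ((\<Sum>j. real (r-1) * t j) + - (1/2) * ln 2)"
    unfolding a_def by (intro sums_add ln_one_minus_inverse_odd_square_sums)
  moreover have "(\<Sum>j. real (r-1) * t j) = real (r-1) * (\<Sum>j. t j)"
    unfolding t_def by (intro suminf_mult summable_dlambda_even_series)
  ultimately show ?thesis unfolding a_def t_def by (simp add: add.commute)
qed

lemma logC_summand_at_quarter:
  "(let n = of_nat (2 * m + 1) :: complex in
     (n / 2) ^ (r - 1) * (LogP r (2 * (1/4) / n) + (-1) ^ (r - 1) * LogP r (- 2 * (1/4) / n)))
   = complex_of_real ((1/4) ^ (r-1) * LogPr_sym r (1 / (2 * real (2*m+1))))"
proof -
  define a where "a = 1 / (2 * real (2*m+1))"
  have "0 < a" "a < 1" unfolding a_def by (auto simp: field_simps)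
  then have LogP_a: "LogP r (complex_of_real a) = complex_of_real (LogPr r a)"
    and LogP_minus_a: "LogP r (complex_of_real (- a)) = complex_of_real (LogPr r (- a))"
    by (intro LogP_of_real, simp)+
  have arg: "2 * (1/4) / (of_nat (2*m+1) :: complex) = complex_of_real a"
    and arg_minus: "- 2 * (1/4) / (of_nat (2*m+1) :: complex) = complex_of_real (- a)"
    and scale: "(of_nat (2*m+1) / 2 :: complex) = complex_of_real ((1/4) * (1 / a))"
    unfolding a_def by (simp_all add: field_simps)
  show ?thesis
    unfolding Let_def arg arg_minus scale LogP_a LogP_minus_a LogPr_sym_def a_def[symmetric]
    by (simp add: power_mult_distrib power_one_over)
qed

theorem corollary2p9:
  fixes r :: nat
  assumes "r \<ge> 2"
  shows "logC r (1/4) = complex_of_real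
    ((1/4) ^ (r - 1) * (- (1/2) * ln 2 + real (r - 1) *
      (\<Sum>m. let n = Suc m in
         dlambda (2 * real n) / (real n * real (2 * n + r - 1) * 2 ^ (2 * n)))))"
proof -
  let ?S = "\<Sum>j. dlambda (2 * real (Suc j)) / (real (Suc j) * real (2 * Suc j + r - 1) * 2 ^ (2 * Suc j))"
  have "(\<lambda>m. (1/4) ^ (r-1) * LogPr_sym r (1 / (2 * real (2*m+1)))) sums
        ((1/4) ^ (r-1) * (- (1/2) * ln 2 + real (r - 1) * ?S))"
    using assms by (intro sums_mult LogPr_sym_odd_sums)
  then have "(\<lambda>m. complex_of_real ((1/4) ^ (r-1) * LogPr_sym r (1 / (2 * real (2*m+1))))) sums
        complex_of_real ((1/4) ^ (r-1) * (- (1/2) * ln 2 + real (r - 1) * ?S))"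
    by (simp only: sums_of_real_iff)
  then have "logC r (1/4) = complex_of_real ((1/4) ^ (r-1) * (- (1/2) * ln 2 + real (r - 1) * ?S))"
    unfolding logC_def logC_summand_at_quarter by (rule sums_unique[symmetric])
  then show ?thesis by (simp add: Let_def)
qed

end
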